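(* Consider the constrained online prediction problem and the \texttt{BanditQ} policy described in the context, run for $T$ rounds with $V_t=V=\Theta(\sqrt{T})$ for $1\le t\le T$. Then $\mathrm{Regret}_T=O(T^{3/4})$, where the constant hidden in $O(\cdot)$ does not depend on $T$ or on the reward sequence (it may depend on $N$ and on the constant in $V=\Theta(\sqrt{T})$).
   Context: There are $N$ users. On each round $t=1,2,\dots$ an online policy chooses a probability vector $\bm{x}(t)=(x_1(t),\dots,x_N(t))$ in the standard simplex $\Delta_N=\{\bm{x}\in\mathbb{R}^N_{\ge 0}:\sum_i x_i=1\}$; afterwards an adversarially chosen reward vector $\bm{r}(t)=(r_1(t),\dots,r_N(t))\in[0,1]^N$ is revealed (full information), and the policy may use all past reward vectors to choose $\bm{x}(t+1)$. A subset $\mathcal{P}\subseteq[N]$ of protected users is given, with target rates $\lambda_i\in[0,1]$, $i\in\mathcal{P}$, satisfying $\sum_{i\in\mathcal{P}}\lambda_i\le 1$; set $\lambda_i=0$ for $i\notin\mathcal{P}$. The feasible set of stationary actions is $\Omega=\{\bm{x}^*\in\Delta_N : r_i(t)x^*_i\ge\lambda_i \text{ for all } i\in\mathcal{P} \text{ and all rounds } t\}$, which is assumed nonempty. The regret of a policy over $T$ rounds is $\mathrm{Regret}_T=\sup_{\bm{x}^*\in\Omega}\sum_{t=1}^T\sum_{i=1}^N r_i(t)\,(x_i^*-x_i(t))$. The \texttt{BanditQ} policy: for each $i\in\mathcal{P}$ maintain $Q_i(0)=0$ and $Q_i(t)=\max\big(0,\,Q_i(t-1)+\lambda_i-r_i(t)x_i(t)\big)$;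 for $i\notin\mathcal{P}$ set $Q_i(t)=0$ for all $t$. Given a non-negative parameter sequence $(V_t)_{t\ge1}$, define surrogate rewards $r'_i(t)=(Q_i(t-1)+V_t)\,r_i(t)$ for all $i\in[N]$. Starting from an arbitrary $\bm{x}(1)\in\Delta_N$, the policy updates by adaptive online gradient ascent: $\bm{x}(t+1)=\Pi_{\Delta_N}\Big(\bm{x}(t)+\bm{r}'(t)\big/\sqrt{2\sum_{\tau=1}^{t}\|\bm{r}'(\tau)\|_2^2}\Big)$, where $\Pi_{\Delta_N}$ denotes Euclidean projection onto $\Delta_N$. *)

theory Defs
  imports "HOL-Analysis.Analysis"
begin

text \<open>Users are indexed by a finite type 'n (so N = CARD('n)); vectors in R^N are real^'n.
  Rounds are t = 1,2,...; r t is the reward vector revealed at round t.\<close>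

definition prob_simplex :: "(real ^ 'n::finite) set" where
  "prob_simplex = {x. (\<forall>i. 0 \<le> x $ i) \<and> (\<Sum>i\<in>UNIV. x $ i) = 1}"

definition proj_simplex :: "real ^ 'n::finite \<Rightarrow> real ^ 'n" where
  "proj_simplex y = closest_point prob_simplex y"

text \<open>State after k rounds (k = 0,1,...): (x(k+1), Q(k), sum_{tau=1}^{k} ||r'(tau)||^2).
  Parameters: rewards r, protected set P, target rates lam, parameter sequence V, initial x1.\<close>
primrec banditq_state ::
  "(nat \<Rightarrow> real ^ 'n::finite) \<Rightarrow> 'n set \<Rightarrow> real ^ 'n \<Rightarrow> (nat \<Rightarrow> real) \<Rightarrow> real ^ 'n
    \<Rightarrow> nat \<Rightarrow> (real ^ 'n) \<times> (real ^ 'n) \<times> real" where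
  "banditq_state r P lam V x1 0 = (x1, 0, 0)"
| "banditq_state r P lam V x1 (Suc k) =
    (let (x, Q, S) = banditq_state r P lam V x1 k;
         t = Suc k;
         r' = (\<chi> i. (Q $ i + V t) * r t $ i);
         S' = S + (norm r')\<^sup>2;
         x' = proj_simplex (x + (1 / sqrt (2 * S')) *\<^sub>R r');
         Q' = (\<chi> i. if i \<in> P then max 0 (Q $ i + lam $ i - r t $ i * x $ i) else 0)
     in (x', Q', S'))"

definition banditq_x ::
  "(nat \<Rightarrow> real ^ 'n::finite) \<Rightarrow> 'n set \<Rightarrow> real ^ 'n \<Rightarrow> (nat \<Rightarrow> real) \<Rightarrow> real ^ 'n
    \<Rightarrow> nat \<Rightarrow> real ^ 'n" where
  "banditq_x r P lam V x1 t = fst (banditq_state r P lam V x1 (t - 1))"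

definition feasible_set ::
  "(nat \<Rightarrow> real ^ 'n::finite) \<Rightarrow> 'n set \<Rightarrow> real ^ 'n \<Rightarrow> nat \<Rightarrow> (real ^ 'n) set" where
  "feasible_set r P lam T =
     {xs \<in> prob_simplex. \<forall>i\<in>P. \<forall>t\<in>{1..T}. r t $ i * xs $ i \<ge> lam $ i}"

definition banditq_regret ::
  "(nat \<Rightarrow> real ^ 'n::finite) \<Rightarrow> 'n set \<Rightarrow> real ^ 'n \<Rightarrow> (nat \<Rightarrow> real) \<Rightarrow> real ^ 'n
    \<Rightarrow> nat \<Rightarrow> real" where
  "banditq_regret r P lam V x1 T =
     Sup ((\<lambda>xs. \<Sum>t=1..T. \<Sum>i\<in>UNIV. r t $ i * (xs $ i - banditq_x r P lam V x1 t $ i))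
          ` feasible_set r P lam T)"

end

theory Submission
  imports Defs
begin

text \<open>BanditQ is adaptive projected gradient ascent on the surrogate rewards
  r'(t) = (Q(t-1) + V) r(t), so against any feasible x* its surrogate regret is at most
  3 sqrt S, where S is the sum of the squared norms of the r'(t). This surrogate regret splits
  into V times the true regret plus a queue term, and the queue term is the drift of the
  Lyapunov function ||Q||^2 up to N T: feasibility of x* makes every coordinate of the queue
  update satisfy Q_i(t)^2 <= Q_i(t-1)^2 + 2 Q_i(t-1) r_i(t) (x*_i - x_i(t)) + 1. Hence
  V Regret + ||Q(T)||^2 / 2 <= 3 sqrt S + N T / 2 (drift plus penalty). The same inequality at
  intermediate rounds bounds ||Q(t)||^2 by O(sqrt S + V T), and ||r'(t)||^2 <= 2 ||Q(t-1)||^2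
  + 2 N V^2 turns this into a quadratic inequality for sqrt S, giving sqrt S = O(T^(5/4)) when
  V = Theta(sqrt T). Therefore Regret = O(T^(5/4) / V) = O(T^(3/4)).\<close>

lemma weighted_telescope_le:
  fixes w d :: "nat \<Rightarrow> real"
  assumes "0 \<le> w 0" "\<And>k. w k \<le> w (Suc k)" "\<And>k. 0 \<le> d k" "\<And>k. d k \<le> \<delta>"
  shows "(\<Sum>k\<le>n. w k * (d k - d (Suc k))) \<le> \<delta> * w n"
proof -
  have "(\<Sum>k\<le>n. w k * (d k - d (Suc k))) \<le> \<delta> * w n - w n * d (Suc n)"
  proof (induction n)
    case 0
    show ?case using mult_left_mono[OF assms(4)[of 0] assms(1)] by (simp add: algebra_simps)
  next
    case (Suc n)
    have "0 \<le> (w (Suc n) - w n) * (\<delta> - d (Suc n))"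
      using assms(2)[of n] assms(4)[of "Suc n"] by simp
    then show ?case using Suc by (simp add: algebra_simps)
  qed
  moreover have "0 \<le> w n"
    using assms(1,2) by (induction n) (auto intro: order_trans)
  then have "0 \<le> w n * d (Suc n)" using assms(3) by simp
  ultimately show ?thesis by linarith
qed

lemma div_sqrt_le_sqrt_diff:
  fixes A a :: real
  assumes "0 \<le> A" "0 \<le> a"
  shows "a / sqrt (A + a) \<le> 2 * (sqrt (A + a) - sqrt A)"
proof (cases "a = 0")
  case False
  then have pos: "0 < sqrt (A + a)" using assms by simp
  have "a = (sqrt (A + a) - sqrt A) * (sqrt (A + a) + sqrt A)"
    using assms by (simp add: algebra_simps)
  also have "\<dots> \<le> (sqrt (A + a) - sqrt A) * (2 * sqrt (A + a))"
    using assms by (intro mult_left_mono) auto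
  finally have "a / sqrt (A + a) \<le> (sqrt (A + a) - sqrt A) * (2 * sqrt (A + a)) / sqrt (A + a)"
    using pos by (intro divide_right_mono) auto
  also have "\<dots> = 2 * (sqrt (A + a) - sqrt A)"
    using pos by simp
  finally show ?thesis .
qed simp

lemma sum_div_sqrt_partial_sums_le:
  fixes a :: "nat \<Rightarrow> real"
  assumes "\<And>k. 0 \<le> a k"
  shows "(\<Sum>k<n. a k / sqrt (\<Sum>j\<le>k. a j)) \<le> 2 * sqrt (\<Sum>k<n. a k)"
proof (induction n)
  case (Suc n)
  have "a n / sqrt ((\<Sum>j<n. a j) + a n) \<le> 2 * (sqrt ((\<Sum>j<n. a j) + a n) - sqrt (\<Sum>j<n. a j))"
    using assms by (intro div_sqrt_le_sqrt_diff sum_nonneg) auto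
  then show ?case using Suc by (simp add: lessThan_Suc_atMost[symmetric])
qed simp

lemma quadratic_le_imp_le:
  fixes u a b :: real
  assumes "0 \<le> a" "0 \<le> b" "u\<^sup>2 \<le> a * u + b"
  shows "u \<le> a + sqrt b"
proof (rule ccontr)
  assume "\<not> ?thesis"
  then have less: "a + sqrt b < u" by simp
  moreover have "0 < u"
    using less assms(1) real_sqrt_ge_zero[OF assms(2)] by linarith
  ultimately have "(a + sqrt b) * u < u * u"
    by (intro mult_strict_right_mono)
  moreover have "sqrt b * sqrt b \<le> u * sqrt b"
    using less assms by (intro mult_right_mono) auto
  ultimately show False using assms by (simp add: power2_eq_square algebra_simps)
qed

lemma closest_point_gradient_step:
  fixes K :: "'a::euclidean_space set"
  assumes "convex K" "closed K" "x \<in> K" "z \<in> K" "0 < \<eta>"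
  shows "g \<bullet> (z - x)
           \<le> ((norm (x - z))\<^sup>2 - (norm (closest_point K (x + \<eta> *\<^sub>R g) - z))\<^sup>2) / (2 * \<eta>)
              + \<eta> / 2 * (norm g)\<^sup>2"
proof -
  have "norm (closest_point K (x + \<eta> *\<^sub>R g) - z) \<le> norm ((x - z) + \<eta> *\<^sub>R g)"
    using closest_point_lipschitz[OF assms(1,2), of "x + \<eta> *\<^sub>R g" z] assms(3,4)
    by (auto simp: closest_point_self dist_norm algebra_simps)
  then have "(norm (closest_point K (x + \<eta> *\<^sub>R g) - z))\<^sup>2 \<le> (norm ((x - z) + \<eta> *\<^sub>R g))\<^sup>2"
    by (simp add: power_mono)
  also have "\<dots> = (norm (x - z))\<^sup>2 - 2 * \<eta> * (g \<bullet> (z - x)) + \<eta>\<^sup>2 * (norm g)\<^sup>2"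
    by (simp only: power2_norm_eq_inner inner_add_left inner_add_right inner_diff_left
        inner_diff_right inner_scaleR_left inner_scaleR_right inner_commute)
      (simp add: algebra_simps power2_eq_square)
  finally show ?thesis
    using assms(5) by (simp add: field_simps power2_eq_square)
qed

lemma adaptive_projected_gradient_regret:
  fixes K :: "'a::euclidean_space set" and x g :: "nat \<Rightarrow> 'a"
  assumes K: "convex K" "closed K"
    and diam: "\<And>a b. a \<in> K \<Longrightarrow> b \<in> K \<Longrightarrow> (norm (a - b))\<^sup>2 \<le> 2"
    and x0: "x 0 \<in> K"
    and step: "\<And>k. x (Suc k) =
                 closest_point K (x k + (1 / sqrt (2 * (\<Sum>j\<le>k. (norm (g j))\<^sup>2))) *\<^sub>R g k)"
    and z: "z \<in> K"
  shows "(\<Sum>k<n. g k \<bullet> (z - x k)) \<le> 3 * sqrt (\<Sum>k<n. (norm (g k))\<^sup>2)"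
proof (cases n)
  case (Suc m)
  define S where "S k = (\<Sum>j\<le>k. (norm (g j))\<^sup>2)" for k
  define w where "w k = sqrt (2 * S k) / 2" for k
  define d where "d k = (norm (x k - z))\<^sup>2" for k
  have S_nonneg: "0 \<le> S k" for k
    unfolding S_def by (simp add: sum_nonneg)
  have xK: "x k \<in> K" for k
    using x0 closest_point_in_set[OF K(2)] by (induction k) (auto simp: step)
  have one_step: "g k \<bullet> (z - x k) \<le> w k * (d k - d (Suc k)) + (norm (g k))\<^sup>2 / (2 * sqrt (S k))"
    for k
  proof (cases "S k = 0")
    case True
    \<comment> \<open>The step size is then the junk value 1 / sqrt 0 = 0, harmless since g k = 0.\<close>
    then have "g k = 0"
      using member_le_sum[where f = "\<lambda>j. (norm (g j))\<^sup>2" and A = "{..k}"] S_nonneg[of k]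
      by (simp add: S_def)
    then show ?thesis using True by (simp add: w_def)
  next
    case False
    then have "0 < S k" using S_nonneg[of k] by simp
    have "g k \<bullet> (z - x k) \<le> (d k - d (Suc k)) * (sqrt (2 * S k) / 2)
                              + (norm (g k))\<^sup>2 / (2 * sqrt (2 * S k))"
      using closest_point_gradient_step[OF K xK[of k] z, of "1 / sqrt (2 * S k)" "g k"] \<open>0 < S k\<close>
      by (simp add: d_def step S_def)
    moreover have "(norm (g k))\<^sup>2 / (2 * sqrt (2 * S k)) \<le> (norm (g k))\<^sup>2 / (2 * sqrt (S k))"
      using \<open>0 < S k\<close> by (intro divide_left_mono) auto
    ultimately show ?thesis by (simp add: w_def mult.commute)
  qed
  have "(\<Sum>k\<le>m. w k * (d k - d (Suc k))) \<le> 2 * w m"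
    using diam[OF xK z]
    by (intro weighted_telescope_le) (auto simp: w_def d_def S_def intro: sum_mono2)
  also have "\<dots> \<le> 2 * sqrt (S m)"
    using S_nonneg[of m] real_le_lsqrt[of 2 2]
    by (simp add: w_def real_sqrt_mult mult_right_mono)
  finally have telescope: "(\<Sum>k\<le>m. w k * (d k - d (Suc k))) \<le> 2 * sqrt (S m)" .
  have "(\<Sum>k\<le>m. (norm (g k))\<^sup>2 / (2 * sqrt (S k)))
          = (\<Sum>k<n. (norm (g k))\<^sup>2 / sqrt (\<Sum>j\<le>k. (norm (g j))\<^sup>2)) / 2"
    by (simp add: Suc S_def lessThan_Suc_atMost sum_divide_distrib mult.commute)
  also have "\<dots> \<le> sqrt (S m)"
    using sum_div_sqrt_partial_sums_le[of "\<lambda>k. (norm (g k))\<^sup>2" n]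
    by (simp add: Suc S_def lessThan_Suc_atMost)
  finally have "(\<Sum>k\<le>m. g k \<bullet> (z - x k)) \<le> 3 * sqrt (S m)"
    using telescope sum_mono[of "{..m}" "\<lambda>k. g k \<bullet> (z - x k)", OF one_step]
    by (simp add: sum.distrib)
  then show ?thesis
    by (simp add: Suc S_def lessThan_Suc_atMost)
qed simp

lemma closed_prob_simplex: "closed (prob_simplex :: (real^'n::finite) set)"
  unfolding prob_simplex_def
  by (intro closed_Collect_conj closed_Collect_all closed_Collect_le closed_Collect_eq
      continuous_intros)

lemma convex_prob_simplex: "convex (prob_simplex :: (real^'n::finite) set)"
proof (unfold convex_def, intro ballI allI impI)
  fix x y :: "real^'n" and u v :: real
  assume x: "x \<in> prob_simplex" and y: "y \<in> prob_simplex" and uv: "0 \<le> u" "0 \<le> v" "u + v = 1"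
  have "(\<Sum>i\<in>UNIV. (u *\<^sub>R x + v *\<^sub>R y) $ i) = u * (\<Sum>i\<in>UNIV. x $ i) + v * (\<Sum>i\<in>UNIV. y $ i)"
    by (simp add: sum.distrib sum_distrib_left)
  then show "u *\<^sub>R x + v *\<^sub>R y \<in> prob_simplex"
    using x y uv by (auto simp: prob_simplex_def)
qed

lemma prob_simplex_nonneg: "x \<in> prob_simplex \<Longrightarrow> 0 \<le> x $ i"
  by (simp add: prob_simplex_def)

lemma prob_simplex_le_1: "x \<in> prob_simplex \<Longrightarrow> x $ i \<le> 1"
  using member_le_sum[where f = "\<lambda>j. x $ j" and A = UNIV and i = i]
  by (simp add: prob_simplex_def)

lemma prob_simplex_dist_sq_le_2:
  assumes "a \<in> prob_simplex" "b \<in> prob_simplex"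
  shows "(norm (a - b))\<^sup>2 \<le> 2"
proof -
  have "(norm (a - b))\<^sup>2 = (\<Sum>i\<in>UNIV. (a $ i - b $ i)\<^sup>2)"
    unfolding power2_norm_eq_inner inner_vec_def by (simp add: power2_eq_square)
  also have "\<dots> \<le> (\<Sum>i\<in>UNIV. a $ i + b $ i)"
  proof (rule sum_mono)
    fix i
    have "\<bar>a $ i - b $ i\<bar> \<le> 1" "\<bar>a $ i - b $ i\<bar> \<le> a $ i + b $ i"
      using prob_simplex_nonneg[OF assms(1), of i] prob_simplex_nonneg[OF assms(2), of i]
        prob_simplex_le_1[OF assms(1), of i] prob_simplex_le_1[OF assms(2), of i]
      by auto
    then have "\<bar>a $ i - b $ i\<bar> * \<bar>a $ i - b $ i\<bar> \<le> 1 * (a $ i + b $ i)"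
      by (intro mult_mono) auto
    then show "(a $ i - b $ i)\<^sup>2 \<le> a $ i + b $ i"
      by (simp add: power2_eq_square)
  qed
  also have "\<dots> = 2"
    using assms by (simp add: sum.distrib prob_simplex_def)
  finally show ?thesis .
qed

lemma queue_update_sq_le:
  fixes q l \<rho> x z :: real
  assumes "0 \<le> q" "0 \<le> \<rho>" "\<rho> \<le> 1" "0 \<le> x" "x \<le> 1" "0 \<le> l" "l \<le> 1" "l \<le> \<rho> * z"
  shows "(max 0 (q + l - \<rho> * x))\<^sup>2 \<le> q\<^sup>2 + 2 * q * \<rho> * (z - x) + 1"
proof -
  have "(max 0 (q + l - \<rho> * x))\<^sup>2 \<le> (q + l - \<rho> * x)\<^sup>2"
    by (cases "0 \<le> q + l - \<rho> * x") auto
  also have "\<dots> = q\<^sup>2 + 2 * q * l - 2 * q * \<rho> * x + (l - \<rho> * x)\<^sup>2"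
    by (simp add: power2_eq_square algebra_simps)
  also have "\<dots> \<le> q\<^sup>2 + 2 * q * \<rho> * (z - x) + 1"
  proof -
    have "q * l \<le> q * (\<rho> * z)"
      using assms by (intro mult_left_mono) auto
    moreover have "0 \<le> \<rho> * x" "\<rho> * x \<le> 1"
      using assms by (auto intro: mult_le_one)
    then have "\<bar>l - \<rho> * x\<bar> \<le> 1"
      using assms(6,7) by arith
    then have "(l - \<rho> * x)\<^sup>2 \<le> 1"
      by (simp add: abs_square_le_1)
    ultimately show ?thesis by (simp add: algebra_simps)
  qed
  finally show ?thesis .
qed

lemma fourth_root_powers:
  fixes T :: real
  assumes "0 < T"
  shows "(T powr (1/4)) ^ 4 = T" "sqrt T = (T powr (1/4))\<^sup>2" "T powr (3/4) = (T powr (1/4)) ^ 3"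
proof -
  have "(T powr (1/4)) ^ n = T powr (n / 4)" for n :: nat
    using assms by (simp add: powr_realpow[symmetric] powr_powr)
  from this[of 4] this[of 2] this[of 3] assms show
    "(T powr (1/4)) ^ 4 = T" "sqrt T = (T powr (1/4))\<^sup>2" "T powr (3/4) = (T powr (1/4)) ^ 3"
    by (simp_all add: powr_half_sqrt)
qed

text \<open>Here q stands for T^(1/4): the hypotheses are c1 sqrt T <= V <= c2 sqrt T and the
  bound of \<open>regret_against_le\<close> below, the conclusion is R <= C T^(3/4).\<close>

lemma regret_rate_bound:
  fixes q N V R c1 c2 :: real
  assumes q: "1 \<le> q" and N: "0 \<le> N" and c1: "0 < c1"
    and V: "c1 * q\<^sup>2 \<le> V" "V \<le> c2 * q\<^sup>2"
    and VR: "V * R \<le> 3 * (12 * q^4 + sqrt (2 * (q^4)\<^sup>2 * N + 4 * V * (q^4)\<^sup>2 + 2 * N * q^4 * V\<^sup>2))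
                      + q^4 * N / 2"
  shows "R \<le> (3 * (12 + sqrt (2 * N + 4 * c2 + 2 * N * c2\<^sup>2)) + N / 2) / c1 * q^3"
proof -
  define B where "B = 2 * N + 4 * c2 + 2 * N * c2\<^sup>2"
  define K where "K = 3 * (12 + sqrt B) + N / 2"
  have q_pos: "0 < q" using q by simp
  have "0 < c1 * q\<^sup>2" using c1 q_pos by simp
  then have V_pos: "0 < V" using V(1) by linarith
  then have "0 < c2 * q\<^sup>2" using V(2) by linarith
  then have c2: "0 < c2" using q_pos by (simp add: zero_less_mult_iff)
  have K_nonneg: "0 \<le> K" using N c2 by (simp add: K_def B_def)
  have q4: "q^4 \<le> q^5" and q8: "q^8 \<le> q^10"
    using q by (auto intro: power_increasing)
  have powers: "(q^4)\<^sup>2 = q^8" "q\<^sup>2 * q^8 = q^10" "(q^5)\<^sup>2 = q^10"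
    by algebra+
  have "2 * (q^4)\<^sup>2 * N \<le> 2 * q^10 * N"
    using q8 N by (simp add: powers mult_right_mono)
  moreover have "4 * V * (q^4)\<^sup>2 \<le> 4 * c2 * q^10"
    using mult_right_mono[OF V(2), of "q^8"] by (simp add: powers mult.assoc)
  moreover have "2 * N * q^4 * V\<^sup>2 \<le> 2 * N * c2\<^sup>2 * q^10"
  proof -
    have "V\<^sup>2 \<le> c2\<^sup>2 * (q\<^sup>2)\<^sup>2"
      using power_mono[OF V(2), of 2] V_pos by (simp add: power_mult_distrib)
    then have "N * q^4 * V\<^sup>2 \<le> N * q^4 * (c2\<^sup>2 * (q\<^sup>2)\<^sup>2)"
      using N by (intro mult_left_mono) auto
    also have "\<dots> = N * c2\<^sup>2 * q^8"
      by algebra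
    also have "\<dots> \<le> N * c2\<^sup>2 * q^10"
      using q8 N by (intro mult_left_mono) auto
    finally show ?thesis by simp
  qed
  ultimately have "2 * (q^4)\<^sup>2 * N + 4 * V * (q^4)\<^sup>2 + 2 * N * q^4 * V\<^sup>2 \<le> B * (q^5)\<^sup>2"
    unfolding B_def powers(3) by (simp add: algebra_simps)
  then have "sqrt (2 * (q^4)\<^sup>2 * N + 4 * V * (q^4)\<^sup>2 + 2 * N * q^4 * V\<^sup>2) \<le> sqrt B * q^5"
    using q_pos by (metis real_sqrt_le_mono real_sqrt_mult real_sqrt_abs abs_of_pos zero_less_power)
  moreover have "q^4 * N \<le> q^5 * N"
    using mult_right_mono[OF q4 N] .
  ultimately have "V * R \<le> K * q^5"
    using VR q4 by (simp add: K_def algebra_simps)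
  then have "R \<le> K * q^5 / V"
    using V_pos by (simp add: pos_le_divide_eq mult.commute)
  also have "\<dots> \<le> K * q^5 / (c1 * q\<^sup>2)"
    using V(1) K_nonneg c1 q_pos V_pos by (intro divide_left_mono) auto
  also have "\<dots> = K / c1 * q^3"
    using q_pos by (simp add: power2_eq_square eval_nat_numeral)
  finally show ?thesis unfolding K_def B_def .
qed

locale banditq =
  fixes r :: "nat \<Rightarrow> real^'n::finite" and P :: "'n set" and lam x1 :: "real^'n"
    and V :: real and T :: nat
  assumes reward_nonneg: "\<And>t i. t \<in> {1..T} \<Longrightarrow> 0 \<le> r t $ i"
    and reward_le_1: "\<And>t i. t \<in> {1..T} \<Longrightarrow> r t $ i \<le> 1"
    and lam_nonneg: "\<And>i. i \<in> P \<Longrightarrow> 0 \<le> lam $ i"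
    and lam_le_1: "\<And>i. i \<in> P \<Longrightarrow> lam $ i \<le> 1"
    and x1_simplex: "x1 \<in> prob_simplex"
    and V_nonneg: "0 \<le> V"
begin

text \<open>Zero-based indexing: \<open>action k\<close> is the action \<open>x(k+1)\<close>, \<open>queue k\<close> is \<open>Q(k)\<close>
  and \<open>surrogate k\<close> is the surrogate reward \<open>r'(k+1)\<close>.\<close>

definition action :: "nat \<Rightarrow> real^'n" where
  "action k = fst (banditq_state r P lam (\<lambda>_. V) x1 k)"

definition queue :: "nat \<Rightarrow> real^'n" where
  "queue k = fst (snd (banditq_state r P lam (\<lambda>_. V) x1 k))"

definition surrogate :: "nat \<Rightarrow> real^'n" where
  "surrogate k = (\<chi> i. (queue k $ i + V) * r (Suc k) $ i)"

lemma banditq_state_eq: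
  "banditq_state r P lam (\<lambda>_. V) x1 k = (action k, queue k, \<Sum>j<k. (norm (surrogate j))\<^sup>2)"
proof (induction k)
  case (Suc k)
  then show ?case
    unfolding action_def queue_def
    by (simp add: Let_def surrogate_def queue_def[symmetric] action_def[symmetric])
qed (simp add: action_def queue_def)

lemma action_0: "action 0 = x1"
  and queue_0: "queue 0 = 0"
  by (simp_all add: action_def queue_def)

lemma action_Suc:
  "action (Suc k) =
     proj_simplex (action k + (1 / sqrt (2 * (\<Sum>j\<le>k. (norm (surrogate j))\<^sup>2))) *\<^sub>R surrogate k)"
  using banditq_state_eq[of k] unfolding action_def[of "Suc k"]
  by (simp add: Let_def surrogate_def lessThan_Suc_atMost[symmetric])

lemma queue_Suc:
  "queue (Suc k) = (\<chi> i. if i \<in> P then max 0 (queue k $ i + lam $ i - r (Suc k) $ i * action k $ i)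
                         else 0)"
  using banditq_state_eq[of k] unfolding queue_def[of "Suc k"]
  by (simp add: Let_def)

lemma banditq_x_Suc: "banditq_x r P lam (\<lambda>_. V) x1 (Suc k) = action k"
  by (simp add: banditq_x_def action_def)

lemma action_in_simplex: "action k \<in> prob_simplex"
  using x1_simplex closest_point_in_set[OF closed_prob_simplex]
  by (induction k) (auto simp: action_0 action_Suc proj_simplex_def)

lemma queue_nonneg: "0 \<le> queue k $ i"
  by (cases k) (simp_all add: queue_0 queue_Suc)

lemma queue_notin: "i \<notin> P \<Longrightarrow> queue k $ i = 0"
  by (cases k) (simp_all add: queue_0 queue_Suc)

lemma surrogate_regret_le:
  assumes "y \<in> prob_simplex"
  shows "(\<Sum>k<n. surrogate k \<bullet> (y - action k)) \<le> 3 * sqrt (\<Sum>k<n. (norm (surrogate k))\<^sup>2)"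
  using convex_prob_simplex closed_prob_simplex prob_simplex_dist_sq_le_2 action_in_simplex
    action_Suc assms
  by (intro adaptive_projected_gradient_regret) (simp_all add: proj_simplex_def)

lemma surrogate_inner_eq:
  "surrogate k \<bullet> (y - action k) =
     (\<Sum>i\<in>UNIV. queue k $ i * r (Suc k) $ i * (y $ i - action k $ i))
     + V * (\<Sum>i\<in>UNIV. r (Suc k) $ i * (y $ i - action k $ i))"
  by (simp add: surrogate_def inner_vec_def sum_distrib_left sum.distrib[symmetric] algebra_simps)

lemma round_regret_ge:
  assumes "k < T" "y \<in> prob_simplex"
  shows "-1 \<le> (\<Sum>i\<in>UNIV. r (Suc k) $ i * (y $ i - action k $ i))"
proof -
  have r: "0 \<le> r (Suc k) $ i" "r (Suc k) $ i \<le> 1" for i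
    using assms(1) reward_nonneg reward_le_1 by auto
  have "(\<Sum>i\<in>UNIV. r (Suc k) $ i * action k $ i) \<le> (\<Sum>i\<in>UNIV. action k $ i)"
    using r prob_simplex_nonneg[OF action_in_simplex]
    by (intro sum_mono) (simp add: mult_left_le_one_le)
  also have "\<dots> = 1"
    using action_in_simplex[of k] by (simp add: prob_simplex_def)
  finally have "(\<Sum>i\<in>UNIV. r (Suc k) $ i * action k $ i) \<le> 1" .
  moreover have "0 \<le> (\<Sum>i\<in>UNIV. r (Suc k) $ i * y $ i)"
    using r prob_simplex_nonneg[OF assms(2)] by (intro sum_nonneg) simp
  ultimately show ?thesis
    by (simp add: right_diff_distrib sum_subtractf)
qed

lemma surrogate_norm_sq_le:
  assumes "k < T"
  shows "(norm (surrogate k))\<^sup>2 \<le> 2 * (norm (queue k))\<^sup>2 + 2 * real CARD('n) * V\<^sup>2"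
proof -
  have "(norm (surrogate k))\<^sup>2 = (\<Sum>i\<in>UNIV. ((queue k $ i + V) * r (Suc k) $ i)\<^sup>2)"
    unfolding power2_norm_eq_inner inner_vec_def surrogate_def by (simp add: power2_eq_square)
  also have "\<dots> \<le> (\<Sum>i\<in>UNIV. 2 * (queue k $ i)\<^sup>2 + 2 * V\<^sup>2)"
  proof (rule sum_mono)
    fix i
    have "0 \<le> r (Suc k) $ i" "r (Suc k) $ i \<le> 1"
      using assms reward_nonneg reward_le_1 by auto
    then have "((queue k $ i + V) * r (Suc k) $ i)\<^sup>2 \<le> (queue k $ i + V)\<^sup>2"
      by (simp add: power_mult_distrib mult_left_le power_le_one)
    also have "\<dots> \<le> 2 * (queue k $ i)\<^sup>2 + 2 * V\<^sup>2"
      using sum_squares_bound[of "queue k $ i" V] by (simp add: power2_eq_square algebra_simps)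
    finally show "((queue k $ i + V) * r (Suc k) $ i)\<^sup>2 \<le> 2 * (queue k $ i)\<^sup>2 + 2 * V\<^sup>2" .
  qed
  also have "\<dots> = 2 * (norm (queue k))\<^sup>2 + 2 * real CARD('n) * V\<^sup>2"
    unfolding power2_norm_eq_inner inner_vec_def
    by (simp add: sum.distrib sum_distrib_left power2_eq_square)
  finally show ?thesis .
qed

context
  fixes xs :: "real^'n"
  assumes xs_feasible: "xs \<in> feasible_set r P lam T"
begin

lemma xs_simplex: "xs \<in> prob_simplex"
  using xs_feasible by (simp add: feasible_set_def)

lemma queue_drift:
  assumes "k < T"
  shows "(norm (queue (Suc k)))\<^sup>2
           \<le> (norm (queue k))\<^sup>2
              + 2 * (\<Sum>i\<in>UNIV. queue k $ i * r (Suc k) $ i * (xs $ i - action k $ i))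
              + real CARD('n)"
proof -
  have "(queue (Suc k) $ i)\<^sup>2
          \<le> (queue k $ i)\<^sup>2 + 2 * (queue k $ i * r (Suc k) $ i * (xs $ i - action k $ i)) + 1" for i
  proof (cases "i \<in> P")
    case True
    have "lam $ i \<le> r (Suc k) $ i * xs $ i"
      using xs_feasible True assms by (simp add: feasible_set_def)
    then show ?thesis
      using True assms queue_update_sq_le[of "queue k $ i" "r (Suc k) $ i" "action k $ i" "lam $ i"]
        queue_nonneg reward_nonneg reward_le_1 lam_nonneg lam_le_1
        prob_simplex_nonneg[OF action_in_simplex] prob_simplex_le_1[OF action_in_simplex]
      by (simp add: queue_Suc mult.assoc)
  qed (simp add: queue_notin)
  then have "(\<Sum>i\<in>UNIV. (queue (Suc k) $ i)\<^sup>2) \<le> (\<Sum>i\<in>UNIV. (queue k $ i)\<^sup>2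
               + 2 * (queue k $ i * r (Suc k) $ i * (xs $ i - action k $ i)) + 1)"
    by (rule sum_mono)
  then show ?thesis
    unfolding power2_norm_eq_inner inner_vec_def
    by (simp add: sum.distrib sum_distrib_left power2_eq_square)
qed

lemma drift_plus_penalty:
  assumes "n \<le> T"
  shows "V * (\<Sum>k<n. \<Sum>i\<in>UNIV. r (Suc k) $ i * (xs $ i - action k $ i)) + (norm (queue n))\<^sup>2 / 2
           \<le> 3 * sqrt (\<Sum>k<n. (norm (surrogate k))\<^sup>2) + real n * real CARD('n) / 2"
proof -
  have "(norm (queue n))\<^sup>2
          \<le> 2 * (\<Sum>k<n. \<Sum>i\<in>UNIV. queue k $ i * r (Suc k) $ i * (xs $ i - action k $ i))
             + real n * real CARD('n)"
    using assms
  proof (induction n)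
    case (Suc n)
    then show ?case
      using queue_drift[of n] by (simp add: algebra_simps)
  qed (simp add: queue_0)
  moreover have "(\<Sum>k<n. surrogate k \<bullet> (xs - action k))
                   \<le> 3 * sqrt (\<Sum>k<n. (norm (surrogate k))\<^sup>2)"
    by (rule surrogate_regret_le[OF xs_simplex])
  moreover have "(\<Sum>k<n. surrogate k \<bullet> (xs - action k))
      = (\<Sum>k<n. \<Sum>i\<in>UNIV. queue k $ i * r (Suc k) $ i * (xs $ i - action k $ i))
        + V * (\<Sum>k<n. \<Sum>i\<in>UNIV. r (Suc k) $ i * (xs $ i - action k $ i))"
    by (simp add: surrogate_inner_eq sum.distrib sum_distrib_left)
  ultimately show ?thesis
    by linarith
qed

lemma queue_norm_sq_le:
  assumes "n \<le> T"
  shows "(norm (queue n))\<^sup>2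
           \<le> 6 * sqrt (\<Sum>k<T. (norm (surrogate k))\<^sup>2) + real T * real CARD('n) + 2 * V * real T"
proof -
  have "(\<Sum>k<n. -1) \<le> (\<Sum>k<n. \<Sum>i\<in>UNIV. r (Suc k) $ i * (xs $ i - action k $ i))"
    using assms by (intro sum_mono round_regret_ge[OF _ xs_simplex]) auto
  then have "- real n \<le> (\<Sum>k<n. \<Sum>i\<in>UNIV. r (Suc k) $ i * (xs $ i - action k $ i))"
    by simp
  then have "- V * n \<le> V * (\<Sum>k<n. \<Sum>i\<in>UNIV. r (Suc k) $ i * (xs $ i - action k $ i))"
    using V_nonneg mult_left_mono by fastforce
  moreover have "sqrt (\<Sum>k<n. (norm (surrogate k))\<^sup>2) \<le> sqrt (\<Sum>k<T. (norm (surrogate k))\<^sup>2)"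
    using assms by (simp add: sum_mono2)
  moreover have "real n * real CARD('n) \<le> real T * real CARD('n)" "V * real n \<le> V * real T"
    using assms V_nonneg by (simp_all add: mult_left_mono)
  ultimately show ?thesis
    using drift_plus_penalty[OF assms] by linarith
qed

lemma surrogate_sq_sum_le:
  "sqrt (\<Sum>k<T. (norm (surrogate k))\<^sup>2)
     \<le> 12 * real T + sqrt (2 * (real T)\<^sup>2 * real CARD('n) + 4 * V * (real T)\<^sup>2
                          + 2 * real CARD('n) * real T * V\<^sup>2)"
proof -
  define u where "u = sqrt (\<Sum>k<T. (norm (surrogate k))\<^sup>2)"
  have "u\<^sup>2 = (\<Sum>k<T. (norm (surrogate k))\<^sup>2)"
    by (simp add: u_def sum_nonneg)
  also have "\<dots> \<le> (\<Sum>k<T. 2 * (6 * u + real T * real CARD('n) + 2 * V * real T)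
                           + 2 * real CARD('n) * V\<^sup>2)"
  proof (rule sum_mono)
    fix k assume "k \<in> {..<T}"
    then show "(norm (surrogate k))\<^sup>2
                 \<le> 2 * (6 * u + real T * real CARD('n) + 2 * V * real T) + 2 * real CARD('n) * V\<^sup>2"
      using surrogate_norm_sq_le[of k] queue_norm_sq_le[of k] unfolding u_def by simp
  qed
  also have "\<dots> = 12 * real T * u + (2 * (real T)\<^sup>2 * real CARD('n) + 4 * V * (real T)\<^sup>2
                                      + 2 * real CARD('n) * real T * V\<^sup>2)"
    by (simp add: power2_eq_square algebra_simps)
  finally have "u \<le> 12 * real T + sqrt (2 * (real T)\<^sup>2 * real CARD('n) + 4 * V * (real T)\<^sup>2
                                       + 2 * real CARD('n) * real T * V\<^sup>2)"
    using V_nonneg by (intro quadratic_le_imp_le) auto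
  then show ?thesis by (simp add: u_def)
qed

lemma regret_against_le:
  "V * (\<Sum>t=1..T. \<Sum>i\<in>UNIV. r t $ i * (xs $ i - banditq_x r P lam (\<lambda>_. V) x1 t $ i))
     \<le> 3 * (12 * real T + sqrt (2 * (real T)\<^sup>2 * real CARD('n) + 4 * V * (real T)\<^sup>2
                                 + 2 * real CARD('n) * real T * V\<^sup>2))
        + real T * real CARD('n) / 2"
proof -
  have reindex: "(\<Sum>t=1..T. \<Sum>i\<in>UNIV. r t $ i * (xs $ i - banditq_x r P lam (\<lambda>_. V) x1 t $ i))
          = (\<Sum>k<T. \<Sum>i\<in>UNIV. r (Suc k) $ i * (xs $ i - action k $ i))"
    by (simp add: sum.atLeast1_atMost_eq banditq_x_Suc)
  show ?thesis
    unfolding reindex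
    using drift_plus_penalty[OF order_refl] surrogate_sq_sum_le zero_le_power2[of "norm (queue T)"]
    by argo
qed

end

lemma banditq_regret_le:
  assumes "1 \<le> T" "0 < c1" "c1 * sqrt (real T) \<le> V" "V \<le> c2 * sqrt (real T)"
    and "feasible_set r P lam T \<noteq> {}"
  shows "banditq_regret r P lam (\<lambda>_. V) x1 T
           \<le> (3 * (12 + sqrt (2 * real CARD('n) + 4 * c2 + 2 * real CARD('n) * c2\<^sup>2))
               + real CARD('n) / 2) / c1 * real T powr (3/4)"
  unfolding banditq_regret_def
proof (rule cSUP_least[OF assms(5)])
  fix xs
  assume "xs \<in> feasible_set r P lam T"
  define q where "q = real T powr (1/4)"
  have q: "1 \<le> q"
    using assms(1) by (simp add: q_def ge_one_powr_ge_zero)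
  have T_pos: "0 < real T"
    using assms(1) by simp
  note T_eq = fourth_root_powers[OF T_pos, folded q_def]
  have "c1 * q\<^sup>2 \<le> V" "V \<le> c2 * q\<^sup>2"
    using assms(3,4) by (simp_all flip: T_eq(2))
  moreover note regret_against_le[OF \<open>xs \<in> feasible_set r P lam T\<close>, unfolded T_eq(1)[symmetric]]
  ultimately show "(\<Sum>t=1..T. \<Sum>i\<in>UNIV. r t $ i * (xs $ i - banditq_x r P lam (\<lambda>_. V) x1 t $ i))
                     \<le> (3 * (12 + sqrt (2 * real CARD('n) + 4 * c2 + 2 * real CARD('n) * c2\<^sup>2))
                         + real CARD('n) / 2) / c1 * real T powr (3/4)"
    unfolding T_eq(3) using regret_rate_bound[OF q _ assms(2)] by simp
qed

end

theorem proposition3: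
  fixes c1 c2 :: real
  assumes "0 < c1"
  shows "\<exists>C. \<forall>(T::nat) (r::nat \<Rightarrow> real ^ 'n::finite) (P::'n set) (lam::real ^ 'n) (x1::real ^ 'n) (V::real).
           1 \<le> T \<longrightarrow>
           (\<forall>t\<in>{1..T}. \<forall>i. 0 \<le> r t $ i \<and> r t $ i \<le> 1) \<longrightarrow>
           (\<forall>i\<in>P. 0 \<le> lam $ i \<and> lam $ i \<le> 1) \<longrightarrow>
           (\<forall>i. i \<notin> P \<longrightarrow> lam $ i = 0) \<longrightarrow>
           (\<Sum>i\<in>P. lam $ i) \<le> 1 \<longrightarrow>
           x1 \<in> prob_simplex \<longrightarrow>
           c1 * sqrt (real T) \<le> V \<longrightarrow> V \<le> c2 * sqrt (real T) \<longrightarrow>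
           feasible_set r P lam T \<noteq> {} \<longrightarrow>
           banditq_regret r P lam (\<lambda>_. V) x1 T \<le> C * real T powr (3/4)"
proof (intro exI allI impI)
  fix T :: nat and r :: "nat \<Rightarrow> real ^ 'n" and P :: "'n set" and lam x1 :: "real ^ 'n" and V :: real
  assume T: "1 \<le> T"
    and rewards: "\<forall>t\<in>{1..T}. \<forall>i. 0 \<le> r t $ i \<and> r t $ i \<le> 1"
    and lam: "\<forall>i\<in>P. 0 \<le> lam $ i \<and> lam $ i \<le> 1"
    \<comment> \<open>Not needed: queues outside P stay 0 anyway, and a feasible point forces the sum bound.\<close>
    and "\<forall>i. i \<notin> P \<longrightarrow> lam $ i = 0" "(\<Sum>i\<in>P. lam $ i) \<le> 1"
    and x1: "x1 \<in> prob_simplex"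
    and V: "c1 * sqrt (real T) \<le> V" "V \<le> c2 * sqrt (real T)"
    and feasible: "feasible_set r P lam T \<noteq> {}"
  have "0 \<le> c1 * sqrt (real T)"
    using assms by simp
  then have "0 \<le> V"
    using V(1) by linarith
  then interpret banditq r P lam x1 V T
    using rewards lam x1 by unfold_locales auto
  show "banditq_regret r P lam (\<lambda>_. V) x1 T
          \<le> (3 * (12 + sqrt (2 * real CARD('n) + 4 * c2 + 2 * real CARD('n) * c2\<^sup>2))
              + real CARD('n) / 2) / c1 * real T powr (3/4)"
    by (rule banditq_regret_le[OF T assms V feasible])
qed

end
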